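(* Let $X=(X_e)_{e}$ be distributed according to the exponential random graph model with parameter $\boldsymbol\beta=(\beta_1,\dots,\beta_s,G_1,\dots,G_s)$ on $n$ vertices, and assume $\frac12\Phi'_{|\boldsymbol\beta|}(1)<1$. Let $T_3(X)=\sum_{\{e,f,g\}\in\mathcal{T}_3}X_eX_fX_g$. There is a constant $C(\boldsymbol\beta)$ depending only on $\boldsymbol\beta$ such that for all $t\ge0$, \[ \mathbb{P}(|T_3-\mathbb{E}T_3|\ge t)\le2\exp\Big(-\frac1{C(\boldsymbol\beta)}\min\Big(\frac{t^2}{\max(C_{S_2}n^4,C_En^3,n^3)},\ \frac{t}{\max(\sqrt{2n},2C_En)},\ \frac{t^{2/3}}2\Big)\Big). \]
   Context: Graphs on vertex set $[n]$ are identified with $x=(x_e)\in\{0,1\}^{\binom{[n]}2}$. Given $s\in\mathbb{N}$, reals $\beta_1,\dots,\beta_s$ and simple graphs $G_i=(V_i,E_i)$ with $G_1$ a single edge, the ERGM is the probability measure on $\{0,1\}^{\binom{[n]}2}$ proportional to $\exp(\sum_{i=1}^s\beta_in^{-|V_i|+2}N_{G_i}(x))$, where $N_{G_i}(x)$ is the number of copies of $G_i$ in $x$. $\Phi_{\boldsymbol\beta}(x)=\sum_{i=1}^s\beta_i|E_i|x^{|E_i|-1}$ and $|\boldsymbol\beta|=(|\beta_1|,\dots,|\beta_s|)$ (same graphs). $\mathcal{T}_3$ is the set of triples of edges forming a triangle. $C_E=\mathbb{E}X_e$ and $C_{S_2}=\mathbb{E}X_eX_f$ for distinct edges $e,f$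 sharing a vertex (these do not depend on the choice of $e,f$). *)

theory Defs
  imports "HOL-Analysis.Analysis"
begin

definition Edges :: "nat \<Rightarrow> nat set set" where
  "Edges n = {{a, b} | a b. a < n \<and> b < n \<and> a \<noteq> b}"

text \<open>A graph x on [n] (an element of {0,1}^(n choose 2)) is represented by its set of
  present edges, a subset of Edges n.  X_e(x) is the indicator of e in x.\<close>
definition Xe :: "nat set \<Rightarrow> nat set set \<Rightarrow> real" where
  "Xe e x = (if e \<in> x then 1 else 0)"

definition simple_graph :: "nat \<Rightarrow> nat set set \<Rightarrow> bool" where
  "simple_graph k E \<longleftrightarrow> E \<subseteq> Edges k"

text \<open>Number of (labelled) copies of G = ({0..<k}, E) in x: edge-preserving injections
  of {0..<k} into [n].\<close>
definition NG :: "nat \<Rightarrow> nat \<times> nat set set \<Rightarrow> nat set set \<Rightarrow> nat" where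
  "NG n G x = card {f \<in> {0..<fst G} \<rightarrow>\<^sub>E {0..<n}.
      inj_on f {0..<fst G} \<and> (\<forall>e \<in> snd G. f ` e \<in> x)}"

definition ergm_H :: "nat \<Rightarrow> (nat \<Rightarrow> real) \<Rightarrow> (nat \<Rightarrow> nat \<times> nat set set) \<Rightarrow> nat
    \<Rightarrow> nat set set \<Rightarrow> real" where
  "ergm_H s beta G n x =
     (\<Sum>i<s. beta i * real n powr (2 - real (fst (G i))) * real (NG n (G i) x))"

definition ergm_E :: "nat \<Rightarrow> (nat \<Rightarrow> real) \<Rightarrow> (nat \<Rightarrow> nat \<times> nat set set) \<Rightarrow> nat
    \<Rightarrow> (nat set set \<Rightarrow> real) \<Rightarrow> real" where
  "ergm_E s beta G n f =
     (\<Sum>x\<in>Pow (Edges n). exp (ergm_H s beta G n x) * f x)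
       / (\<Sum>x\<in>Pow (Edges n). exp (ergm_H s beta G n x))"

definition ergm_P :: "nat \<Rightarrow> (nat \<Rightarrow> real) \<Rightarrow> (nat \<Rightarrow> nat \<times> nat set set) \<Rightarrow> nat
    \<Rightarrow> (nat set set \<Rightarrow> bool) \<Rightarrow> real" where
  "ergm_P s beta G n P = ergm_E s beta G n (\<lambda>x. if P x then 1 else 0)"

definition Phi :: "nat \<Rightarrow> (nat \<Rightarrow> real) \<Rightarrow> (nat \<Rightarrow> nat \<times> nat set set) \<Rightarrow> real \<Rightarrow> real" where
  "Phi s beta G y = (\<Sum>i<s. beta i * real (card (snd (G i))) * y ^ (card (snd (G i)) - 1))"

definition T3set :: "nat \<Rightarrow> nat set set set" where
  "T3set n = {{{a, b}, {b, c}, {a, c}} | a b c. a < n \<and> b < n \<and> c < n \<and>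
                a \<noteq> b \<and> b \<noteq> c \<and> a \<noteq> c}"

definition T3 :: "nat \<Rightarrow> nat set set \<Rightarrow> real" where
  "T3 n x = (\<Sum>t\<in>T3set n. \<Prod>e\<in>t. Xe e x)"

text \<open>C_E = E X_e and C_{S_2} = E X_e X_f for the edges e = {0,1}, f = {0,2}
  (independent of the choice by symmetry).\<close>
definition C_E :: "nat \<Rightarrow> (nat \<Rightarrow> real) \<Rightarrow> (nat \<Rightarrow> nat \<times> nat set set) \<Rightarrow> nat \<Rightarrow> real" where
  "C_E s beta G n = ergm_E s beta G n (Xe {0, 1})"

definition C_S2 :: "nat \<Rightarrow> (nat \<Rightarrow> real) \<Rightarrow> (nat \<Rightarrow> nat \<times> nat set set) \<Rightarrow> nat \<Rightarrow> real" where
  "C_S2 s beta G n = ergm_E s beta G n (\<lambda>x. Xe {0, 1} x * Xe {0, 2} x)"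

end

theory Submission
  imports Defs
begin

(* The Glauber dynamics of the ERGM resamples a uniformly chosen edge from its conditional law.
   The hypothesis says that the total influence of one edge on the conditional laws of all the
   others is at most alpha = Phi'_|beta|(1)/2 < 1 (Dobrushin's condition), so one step of the
   dynamics contracts the bounded-difference constant of every observable by the factor
   1 - (1 - alpha)/|E|.  Summing the iterates solves the Poisson equation for an observable f with
   bounded differences F, and summation by parts against the stationary measure bounds
   E[f exp(theta f)] by theta F^2 |E| / (1 - alpha) E[exp(theta f)]; Herbst's argument turns this
   into sub-Gaussian tails with variance proxy F^2 |E| / (1 - alpha).  For the triangle count
   F = n and |E| <= n^2, so the variance proxy is O(n^4).  Since toggling one edge changes the
   Hamiltonian by a bounded amount, C_S2 is bounded below uniformly in n, and the term
   t^2 / (C_S2 n^4) of the claimed exponent already suffices. *)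

section \<open>Glauber dynamics\<close>

definition glauber_prob :: "('a set \<Rightarrow> real) \<Rightarrow> 'a \<Rightarrow> 'a set \<Rightarrow> real" where
  "glauber_prob w j x = w (insert j x) / (w (insert j x) + w (x - {j}))"

definition heat_bath :: "('a set \<Rightarrow> real) \<Rightarrow> 'a \<Rightarrow> ('a set \<Rightarrow> real) \<Rightarrow> 'a set \<Rightarrow> real" where
  "heat_bath w j h x = glauber_prob w j x * h (insert j x) + (1 - glauber_prob w j x) * h (x - {j})"

definition glauber :: "'a set \<Rightarrow> ('a set \<Rightarrow> real) \<Rightarrow> ('a set \<Rightarrow> real) \<Rightarrow> 'a set \<Rightarrow> real" where
  "glauber S w h x = (\<Sum>j\<in>S. heat_bath w j h x) / real (card S)"

definition bounded_differences :: "'a set \<Rightarrow> ('a set \<Rightarrow> real) \<Rightarrow> real \<Rightarrow> bool" where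
  "bounded_differences S h c \<longleftrightarrow> (\<forall>e\<in>S. \<forall>x. \<bar>h (insert e x) - h (x - {e})\<bar> \<le> c)"

lemma bounded_differencesD:
  "bounded_differences S h c \<Longrightarrow> e \<in> S \<Longrightarrow> \<bar>h (insert e x) - h (x - {e})\<bar> \<le> c"
  unfolding bounded_differences_def by blast

lemma bounded_differencesD':
  assumes "bounded_differences S h c" "e \<in> y" "e \<in> S"
  shows "\<bar>h y - h (y - {e})\<bar> \<le> c"
  using bounded_differencesD[OF assms(1,3), of y] assms(2) by (simp add: insert_absorb)

lemma bounded_differences_mono:
  "bounded_differences S h c \<Longrightarrow> c \<le> d \<Longrightarrow> bounded_differences S h d"
  unfolding bounded_differences_def by (meson order_trans)

lemma bounded_differences_sum:
  assumes "finite A" "\<And>k. k \<in> A \<Longrightarrow> bounded_differences S (H k) (c k)"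
  shows "bounded_differences S (\<lambda>x. \<Sum>k\<in>A. H k x) (\<Sum>k\<in>A. c k)"
  unfolding bounded_differences_def
proof (intro ballI allI)
  fix e x assume e: "e \<in> S"
  have "\<bar>(\<Sum>k\<in>A. H k (insert e x)) - (\<Sum>k\<in>A. H k (x - {e}))\<bar>
      \<le> (\<Sum>k\<in>A. \<bar>H k (insert e x) - H k (x - {e})\<bar>)"
    by (simp add: sum_subtractf[symmetric] sum_abs)
  also have "\<dots> \<le> (\<Sum>k\<in>A. c k)"
    using assms(2) e by (intro sum_mono bounded_differencesD)
  finally show "\<bar>(\<Sum>k\<in>A. H k (insert e x)) - (\<Sum>k\<in>A. H k (x - {e}))\<bar> \<le> (\<Sum>k\<in>A. c k)" .
qed

lemma bounded_differences_diff_const: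
  "bounded_differences S h c \<Longrightarrow> bounded_differences S (\<lambda>x. h x - a) c"
  unfolding bounded_differences_def by simp

lemma bounded_differences_uminus:
  "bounded_differences S h c \<Longrightarrow> bounded_differences S (\<lambda>x. - h x) c"
  unfolding bounded_differences_def by (simp add: abs_minus_commute)

lemma glauber_sum: "glauber S w (\<lambda>x. \<Sum>k\<in>A. H k x) x = (\<Sum>k\<in>A. glauber S w (H k) x)"
  unfolding glauber_def heat_bath_def
  by (simp add: sum_divide_distrib[symmetric] sum_distrib_left sum.distrib[symmetric] sum.swap[of _ S A])

lemma abs_exp_diff_le: "\<bar>exp a - exp b\<bar> \<le> \<bar>a - b\<bar> * (exp a + exp (b::real))"
proof -
  have *: "\<bar>exp a - exp b\<bar> \<le> \<bar>a - b\<bar> * (exp a + exp b)" if "b \<le> a" for a b :: real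
  proof -
    have "exp a * (1 + (b - a)) \<le> exp a * exp (b - a)"
      by (intro mult_left_mono exp_ge_add_one_self) simp
    then have "exp a - exp b \<le> (a - b) * exp a"
      by (simp add: exp_diff algebra_simps)
    moreover have "(a - b) * exp a \<le> (a - b) * (exp a + exp b)"
      using that by (intro mult_left_mono) auto
    ultimately show ?thesis using that by simp
  qed
  show ?thesis
    using *[of b a] *[of a b] by (cases "b \<le> a") (auto simp: abs_minus_commute add.commute)
qed

lemma le_of_le_add_geometric:
  assumes "\<And>K::nat. a \<le> b + c * r ^ K" "0 \<le> r" "r < (1::real)"
  shows "a \<le> b"
proof -
  have "(\<lambda>K. b + c * r ^ K) \<longlonglongrightarrow> b + c * 0"
    by (intro tendsto_intros LIMSEQ_power_zero) (use assms in auto)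
  then show ?thesis using assms(1) by (intro LIMSEQ_le_const) auto
qed

locale positive_weight =
  fixes S :: "'a set" and w :: "'a set \<Rightarrow> real"
  assumes finite_S: "finite S" and S_nonempty: "S \<noteq> {}" and w_pos: "\<And>x. 0 < w x"
begin

lemma card_S_pos: "0 < card S"
  using finite_S S_nonempty by (simp add: card_gt_0_iff)

lemma sum_w_pos: "0 < (\<Sum>x\<in>Pow S. w x)"
  using finite_S w_pos by (intro sum_pos) auto

lemma glauber_prob_bounds: "0 \<le> glauber_prob w j x" "glauber_prob w j x \<le> 1"
  using w_pos[of "insert j x"] w_pos[of "x - {j}"] by (auto simp: glauber_prob_def divide_simps)

lemma sum_Pow_split:
  "(\<Sum>x\<in>Pow S. f x) = (\<Sum>x\<in>{x\<in>Pow S. j \<in> x}. f x) + (\<Sum>x\<in>{x\<in>Pow S. j \<notin> x}. f x)"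
proof -
  have "(\<Sum>x\<in>Pow S. f x) = (\<Sum>x\<in>{x\<in>Pow S. j \<in> x} \<union> {x\<in>Pow S. j \<notin> x}. f x)"
    by (rule sum.cong) auto
  also have "\<dots> = (\<Sum>x\<in>{x\<in>Pow S. j \<in> x}. f x) + (\<Sum>x\<in>{x\<in>Pow S. j \<notin> x}. f x)"
    using finite_S by (intro sum.union_disjoint) auto
  finally show ?thesis .
qed

lemma sum_Pow_not_mem:
  "j \<in> S \<Longrightarrow> (\<Sum>x\<in>{x\<in>Pow S. j \<notin> x}. f x) = (\<Sum>y\<in>{y\<in>Pow S. j \<in> y}. f (y - {j}))"
  by (rule sum.reindex_bij_witness[where j = "insert j" and i = "\<lambda>y. y - {j}"]) auto

lemma sum_Pow_pairs:
  "j \<in> S \<Longrightarrow> (\<Sum>x\<in>Pow S. f x) = (\<Sum>y\<in>{y\<in>Pow S. j \<in> y}. f y + f (y - {j}))"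
  using sum_Pow_split[of f j] sum_Pow_not_mem[of j f] by (simp add: sum.distrib)

lemma heat_bath_same_site: "heat_bath w e h (insert e x) = heat_bath w e h (x - {e})"
  unfolding heat_bath_def glauber_prob_def by simp

lemma heat_bath_diff_le:
  assumes h: "bounded_differences S h c" and e: "e \<in> S" and j: "j \<in> S" "j \<noteq> e"
  shows "\<bar>heat_bath w j h (insert e x) - heat_bath w j h (x - {e})\<bar>
    \<le> c + \<bar>glauber_prob w j (insert e x) - glauber_prob w j (x - {e})\<bar> * c"
proof -
  define p1 where "p1 = glauber_prob w j (insert e x)"
  define p0 where "p0 = glauber_prob w j (x - {e})"
  define a1 where "a1 = h (insert j (insert e x))"
  define a0 where "a0 = h (insert j (x - {e}))"
  define b1 where "b1 = h (insert e x - {j})"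
  define b0 where "b0 = h (x - {e} - {j})"
  have "\<bar>a1 - a0\<bar> \<le> c"
    using bounded_differencesD[OF h e, of "insert j x"] j
    by (simp add: a1_def a0_def insert_commute insert_Diff_if)
  moreover have "\<bar>b1 - b0\<bar> \<le> c"
    using bounded_differencesD[OF h e, of "x - {j}"] j
    by (simp add: b1_def b0_def insert_Diff_if Diff_insert2[symmetric] insert_commute)
  moreover have "\<bar>a0 - b0\<bar> \<le> c"
    using bounded_differencesD[OF h j(1), of "x - {e}"] by (simp add: a0_def b0_def)
  moreover have "0 \<le> p1" "p1 \<le> 1" unfolding p1_def using glauber_prob_bounds by auto
  ultimately have "\<bar>p1 * (a1 - a0)\<bar> \<le> p1 * c" "\<bar>(1 - p1) * (b1 - b0)\<bar> \<le> (1 - p1) * c"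
      "\<bar>(p1 - p0) * (a0 - b0)\<bar> \<le> \<bar>p1 - p0\<bar> * c"
    by (simp_all add: abs_mult mult_left_mono)
  moreover have "heat_bath w j h (insert e x) - heat_bath w j h (x - {e})
      = p1 * (a1 - a0) + (1 - p1) * (b1 - b0) + (p1 - p0) * (a0 - b0)"
    unfolding heat_bath_def p1_def p0_def a1_def a0_def b1_def b0_def by (simp add: algebra_simps)
  ultimately show ?thesis
    unfolding p1_def[symmetric] p0_def[symmetric] by (simp add: abs_le_iff algebra_simps) linarith
qed

lemma diff_glauber_eq:
  "h x - glauber S w h x = (\<Sum>j\<in>S. h x - heat_bath w j h x) / real (card S)"
  using card_S_pos by (simp add: glauber_def sum_subtractf field_simps)

text \<open>By detailed balance this is both \<open>w y * (1 - glauber_prob w j y)\<close> and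
  \<open>w (y - {j}) * glauber_prob w j (y - {j})\<close>, the flow of the dynamics between \<open>y\<close> and \<open>y - {j}\<close>.\<close>
definition conductance :: "'a \<Rightarrow> 'a set \<Rightarrow> real" where
  "conductance j y = w y * w (y - {j}) / (w y + w (y - {j}))"

lemma conductance_bounds:
  "0 \<le> conductance j y" "conductance j y \<le> w y" "conductance j y \<le> w (y - {j})"
  using w_pos[of y] w_pos[of "y - {j}"] unfolding conductance_def by (auto simp: field_simps)

lemma summation_by_parts_site:
  assumes j: "j \<in> S"
  shows "(\<Sum>x\<in>Pow S. w x * (h x - heat_bath w j h x) * u x) =
    (\<Sum>y\<in>{y\<in>Pow S. j \<in> y}. conductance j y * (h y - h (y - {j})) * (u y - u (y - {j})))"
proof -
  have "w y * (h y - heat_bath w j h y) * u y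
      + w (y - {j}) * (h (y - {j}) - heat_bath w j h (y - {j})) * u (y - {j})
      = conductance j y * (h y - h (y - {j})) * (u y - u (y - {j}))" if "j \<in> y" for y
  proof -
    have y: "insert j y = y" "insert j (y - {j}) = y" using that by auto
    define p where "p = glauber_prob w j y"
    have c: "w y * (1 - p) = conductance j y" "w (y - {j}) * p = conductance j y"
      using add_pos_pos[OF w_pos[of y] w_pos[of "y - {j}"]]
      by (simp_all add: p_def glauber_prob_def conductance_def y field_simps)
    have "glauber_prob w j (y - {j}) = p"
      by (simp add: p_def glauber_prob_def y)
    then have hb: "h y - heat_bath w j h y = (1 - p) * (h y - h (y - {j}))"
      "h (y - {j}) - heat_bath w j h (y - {j}) = - p * (h y - h (y - {j}))"
      using y by (simp_all add: heat_bath_def p_def algebra_simps)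
    have "w y * (h y - heat_bath w j h y) * u y
        + w (y - {j}) * (h (y - {j}) - heat_bath w j h (y - {j})) * u (y - {j})
        = (w y * (1 - p)) * (h y - h (y - {j})) * u y
          - (w (y - {j}) * p) * (h y - h (y - {j})) * u (y - {j})"
      unfolding hb by (simp add: algebra_simps)
    then show ?thesis unfolding c by (simp add: algebra_simps)
  qed
  then show ?thesis
    by (simp add: sum_Pow_pairs[OF j])
qed

lemma sum_weight_diff_glauber:
  "(\<Sum>x\<in>Pow S. w x * (h x - glauber S w h x) * u x)
    = (\<Sum>j\<in>S. \<Sum>x\<in>Pow S. w x * (h x - heat_bath w j h x) * u x) / real (card S)"
proof -
  have "(\<Sum>x\<in>Pow S. w x * (h x - glauber S w h x) * u x)
      = (\<Sum>x\<in>Pow S. \<Sum>j\<in>S. w x * (h x - heat_bath w j h x) * u x) / real (card S)"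
    by (simp add: diff_glauber_eq sum_divide_distrib sum_distrib_left sum_distrib_right)
  then show ?thesis by (simp add: sum.swap[of _ "Pow S" S])
qed

lemma sum_weight_glauber: "(\<Sum>x\<in>Pow S. w x * glauber S w h x) = (\<Sum>x\<in>Pow S. w x * h x)"
proof -
  have "(\<Sum>x\<in>Pow S. w x * (h x - heat_bath w j h x) * 1) = 0" if "j \<in> S" for j
    unfolding summation_by_parts_site[OF that] by simp
  then have "(\<Sum>x\<in>Pow S. w x * (h x - glauber S w h x) * 1) = 0"
    unfolding sum_weight_diff_glauber by simp
  then show ?thesis
    by (simp add: right_diff_distrib sum_subtractf)
qed

lemma sum_weight_glauber_iter:
  "(\<Sum>x\<in>Pow S. w x * (glauber S w ^^ k) h x) = (\<Sum>x\<in>Pow S. w x * h x)"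
  by (induction k) (simp_all add: sum_weight_glauber)

lemma site_dirichlet_exp_le:
  assumes j: "j \<in> S" and th: "0 \<le> \<theta>" and g: "bounded_differences S g c"
    and f: "bounded_differences S f F"
  shows "\<bar>\<Sum>x\<in>Pow S. w x * (g x - heat_bath w j g x) * exp (\<theta> * f x)\<bar>
    \<le> c * \<theta> * F * (\<Sum>x\<in>Pow S. w x * exp (\<theta> * f x))"
proof -
  define u where "u x = exp (\<theta> * f x)" for x
  have "c \<ge> 0" "F \<ge> 0" using bounded_differencesD[OF g j] bounded_differencesD[OF f j]
    by (meson abs_ge_zero order_trans)+
  have term_le: "\<bar>conductance j y * (g y - g (y - {j})) * (u y - u (y - {j}))\<bar>
      \<le> c * \<theta> * F * (w y * u y + w (y - {j}) * u (y - {j}))" if y: "j \<in> y" for y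
  proof -
    have dg: "\<bar>g y - g (y - {j})\<bar> \<le> c" by (rule bounded_differencesD'[OF g y j])
    have "\<bar>u y - u (y - {j})\<bar> \<le> \<bar>\<theta> * f y - \<theta> * f (y - {j})\<bar> * (u y + u (y - {j}))"
      unfolding u_def by (rule abs_exp_diff_le)
    also have "\<dots> \<le> \<theta> * F * (u y + u (y - {j}))"
      using bounded_differencesD'[OF f y j] th
      by (intro mult_right_mono) (auto simp: u_def abs_mult right_diff_distrib[symmetric] mult_left_mono)
    finally have du: "\<bar>u y - u (y - {j})\<bar> \<le> \<theta> * F * (u y + u (y - {j}))" .
    have "\<bar>conductance j y * (g y - g (y - {j})) * (u y - u (y - {j}))\<bar>
        \<le> conductance j y * c * (\<theta> * F * (u y + u (y - {j})))"
      using dg du conductance_bounds(1)[of j y] by (simp add: abs_mult mult_mono)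
    also have "\<dots> = c * \<theta> * F * (conductance j y * u y + conductance j y * u (y - {j}))"
      by (simp add: algebra_simps)
    also have "\<dots> \<le> c * \<theta> * F * (w y * u y + w (y - {j}) * u (y - {j}))"
      using conductance_bounds[of j y] \<open>c \<ge> 0\<close> \<open>F \<ge> 0\<close> th
      by (intro mult_left_mono add_mono mult_right_mono) (auto simp: u_def)
    finally show ?thesis .
  qed
  have "\<bar>\<Sum>x\<in>Pow S. w x * (g x - heat_bath w j g x) * u x\<bar>
      \<le> (\<Sum>y\<in>{y\<in>Pow S. j \<in> y}. c * \<theta> * F * (w y * u y + w (y - {j}) * u (y - {j})))"
    unfolding summation_by_parts_site[OF j] by (rule order_trans[OF sum_abs sum_mono]) (simp add: term_le)
  also have "\<dots> = c * \<theta> * F * (\<Sum>x\<in>Pow S. w x * u x)"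
    by (simp add: sum_Pow_pairs[OF j] sum_distrib_left)
  finally show ?thesis unfolding u_def .
qed

lemma dirichlet_exp_le:
  assumes th: "0 \<le> \<theta>" and g: "bounded_differences S g c" and f: "bounded_differences S f F"
  shows "\<bar>\<Sum>x\<in>Pow S. w x * (g x - glauber S w g x) * exp (\<theta> * f x)\<bar>
    \<le> c * \<theta> * F * (\<Sum>x\<in>Pow S. w x * exp (\<theta> * f x))"
proof -
  have "\<bar>\<Sum>j\<in>S. \<Sum>x\<in>Pow S. w x * (g x - heat_bath w j g x) * exp (\<theta> * f x)\<bar>
      \<le> (\<Sum>j\<in>S. c * \<theta> * F * (\<Sum>x\<in>Pow S. w x * exp (\<theta> * f x)))"
    using site_dirichlet_exp_le[OF _ th g f] by (intro order_trans[OF sum_abs sum_mono])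
  then show ?thesis
    unfolding sum_weight_diff_glauber abs_divide using card_S_pos
    by (simp add: pos_divide_le_eq mult.commute)
qed

lemma bounded_differences_oscillation:
  assumes h: "bounded_differences S h c" and x: "x \<subseteq> S"
  shows "\<bar>h x - h {}\<bar> \<le> real (card S) * c"
proof -
  have "finite x" using x finite_S finite_subset by blast
  then have "\<bar>h x - h {}\<bar> \<le> real (card x) * c" using x
  proof (induction x rule: finite_induct)
    case (insert a x)
    have "\<bar>h (insert a x) - h x\<bar> \<le> c"
      using bounded_differencesD[OF h, of a x] insert by simp
    then show ?case using insert by (simp add: algebra_simps)
  qed simp
  moreover have "0 \<le> c" using bounded_differencesD[OF h, of _ x] S_nonempty
    by (meson abs_ge_zero all_not_in_conv order_trans)
  ultimately show ?thesis
    using card_mono[OF finite_S x] by (meson mult_right_mono of_nat_le_iff order_trans)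
qed

lemma bounded_differences_mean_zero_le:
  assumes h: "bounded_differences S h c" and mean: "(\<Sum>y\<in>Pow S. w y * h y) = 0"
    and x: "x \<subseteq> S"
  shows "\<bar>h x\<bar> \<le> 2 * real (card S) * c"
proof -
  have dist: "\<bar>h x - h y\<bar> \<le> 2 * real (card S) * c" if "y \<in> Pow S" for y
    using bounded_differences_oscillation[OF h x] bounded_differences_oscillation[OF h, of y] that
    by auto
  have "(\<Sum>y\<in>Pow S. w y * (h x - h y)) = (\<Sum>y\<in>Pow S. w y) * h x - (\<Sum>y\<in>Pow S. w y * h y)"
    by (simp add: right_diff_distrib sum_subtractf sum_distrib_right)
  then have "(\<Sum>y\<in>Pow S. w y) * h x = (\<Sum>y\<in>Pow S. w y * (h x - h y))"
    using mean by simp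
  also have "\<bar>\<dots>\<bar> \<le> (\<Sum>y\<in>Pow S. w y * (2 * real (card S) * c))"
    using dist w_pos
    by (intro order_trans[OF sum_abs sum_mono]) (simp add: abs_mult less_imp_le mult_left_mono)
  also have "\<dots> = (\<Sum>y\<in>Pow S. w y) * (2 * real (card S) * c)"
    by (simp add: sum_distrib_right)
  finally show ?thesis using sum_w_pos by (simp add: abs_mult)
qed

lemma sum_weight_le_sum_weight_containing:
  assumes e: "e \<in> S" and K: "\<And>x. w (x - {e}) \<le> K * w (insert e x)"
    and Q: "\<And>x. Q (insert e x) = Q (x - {e})"
  shows "(\<Sum>x\<in>Pow S. if Q x then w x else 0) \<le> (1 + K) * (\<Sum>x\<in>Pow S. if Q x \<and> e \<in> x then w x else 0)"
proof -
  have "(if Q (y - {e}) then w (y - {e}) else 0) \<le> K * (if Q y then w y else 0)" if "e \<in> y" for y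
    using K[of y] Q[of y] that by (simp add: insert_absorb)
  then have "(\<Sum>x\<in>Pow S. if Q x then w x else 0)
      \<le> (\<Sum>y\<in>{y\<in>Pow S. e \<in> y}. (if Q y then w y else 0) + K * (if Q y then w y else 0))"
    unfolding sum_Pow_pairs[OF e] by (intro sum_mono add_left_mono) auto
  also have "\<dots> = (1 + K) * (\<Sum>y\<in>{y\<in>Pow S. e \<in> y}. if Q y then w y else 0)"
    by (simp add: sum.distrib sum_distrib_left algebra_simps)
  also have "(\<Sum>y\<in>{y\<in>Pow S. e \<in> y}. if Q y then w y else 0)
      = (\<Sum>x\<in>Pow S. if Q x \<and> e \<in> x then w x else 0)"
    using finite_S by (subst sum.inter_filter) (auto intro!: sum.cong)
  finally show ?thesis .
qed

end

section \<open>Concentration under Dobrushin's condition\<close>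

locale dobrushin = positive_weight +
  fixes \<alpha> :: real
  assumes \<alpha>_nonneg: "0 \<le> \<alpha>" and \<alpha>_less_1: "\<alpha> < 1"
    and dobrushin_condition: "\<And>e x. e \<in> S \<Longrightarrow>
      (\<Sum>j\<in>S - {e}. \<bar>glauber_prob w j (insert e x) - glauber_prob w j (x - {e})\<bar>) \<le> \<alpha>"
begin

definition contraction_rate :: real where
  "contraction_rate = 1 - (1 - \<alpha>) / real (card S)"

lemma contraction_rate_bounds: "0 \<le> contraction_rate" "contraction_rate < 1"
proof -
  have "1 \<le> real (card S)" using card_S_pos by simp
  then have "(1 - \<alpha>) / real (card S) \<le> 1" using \<alpha>_nonneg \<alpha>_less_1 by (simp add: divide_simps)
  then show "0 \<le> contraction_rate" unfolding contraction_rate_def by simp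
  show "contraction_rate < 1" unfolding contraction_rate_def using \<alpha>_less_1 card_S_pos by simp
qed

lemma glauber_contraction:
  assumes h: "bounded_differences S h c" and c: "0 \<le> c"
  shows "bounded_differences S (glauber S w h) (contraction_rate * c)"
  unfolding bounded_differences_def
proof (intro ballI allI)
  fix e x assume e: "e \<in> S"
  let ?D = "\<lambda>j. heat_bath w j h (insert e x) - heat_bath w j h (x - {e})"
  \<comment> \<open>the site \<open>e\<close> itself contributes nothing, every other site at most \<open>c\<close> plus its influence\<close>
  have "\<bar>\<Sum>j\<in>S. ?D j\<bar> = \<bar>\<Sum>j\<in>S - {e}. ?D j\<bar>"
    using sum.remove[OF finite_S e, of ?D] by (simp add: heat_bath_same_site)
  also have "\<dots> \<le> (\<Sum>j\<in>S - {e}. c + \<bar>glauber_prob w j (insert e x) - glauber_prob w j (x - {e})\<bar> * c)"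
    using heat_bath_diff_le[OF h e] by (intro order_trans[OF sum_abs sum_mono]) auto
  also have "\<dots> \<le> (real (card S) - 1) * c + \<alpha> * c"
    using dobrushin_condition[OF e, of x] c finite_S e card_S_pos
    by (simp add: sum.distrib sum_distrib_right[symmetric] of_nat_diff mult_right_mono)
  also have "\<dots> = real (card S) * (contraction_rate * c)"
    unfolding contraction_rate_def using card_S_pos by (simp add: field_simps)
  finally show "\<bar>glauber S w h (insert e x) - glauber S w h (x - {e})\<bar> \<le> contraction_rate * c"
    unfolding glauber_def diff_divide_distrib[symmetric] sum_subtractf[symmetric] abs_divide
    using card_S_pos by (simp add: pos_divide_le_eq mult.commute)
qed

lemma glauber_iter_contraction:
  assumes "bounded_differences S h c" "0 \<le> c"
  shows "bounded_differences S ((glauber S w ^^ k) h) (contraction_rate ^ k * c)"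
proof (induction k)
  case (Suc k)
  then show ?case
    using glauber_contraction[OF Suc] contraction_rate_bounds assms(2)
    by (simp add: mult.assoc)
qed (use assms in simp)

lemma bounded_differences_glauber_partial_sum:
  assumes f: "bounded_differences S f F" and F: "0 \<le> F"
  shows "bounded_differences S (\<lambda>x. \<Sum>k<K. (glauber S w ^^ k) f x) (real (card S) / (1 - \<alpha>) * F)"
proof (rule bounded_differences_mono)
  show "bounded_differences S (\<lambda>x. \<Sum>k<K. (glauber S w ^^ k) f x) (\<Sum>k<K. contraction_rate ^ k * F)"
    by (intro bounded_differences_sum glauber_iter_contraction f F) auto
  have "(\<Sum>k<K. contraction_rate ^ k) = (1 - contraction_rate ^ K) / (1 - contraction_rate)"
    using contraction_rate_bounds by (simp add: sum_gp_strict)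
  also have "\<dots> \<le> 1 / (1 - contraction_rate)"
    using contraction_rate_bounds by (intro divide_right_mono) auto
  also have "\<dots> = real (card S) / (1 - \<alpha>)"
    unfolding contraction_rate_def using card_S_pos \<alpha>_less_1 by simp
  finally show "(\<Sum>k<K. contraction_rate ^ k * F) \<le> real (card S) / (1 - \<alpha>) * F"
    unfolding sum_distrib_right[symmetric] using F by (rule mult_right_mono)
qed

lemma glauber_telescope:
  fixes f :: "'a set \<Rightarrow> real" and K :: nat
  defines "g \<equiv> \<lambda>x. \<Sum>k<K. (glauber S w ^^ k) f x"
  shows "f x = (g x - glauber S w g x) + (glauber S w ^^ K) f x"
proof -
  have "g x - glauber S w g x = (\<Sum>k<K. (glauber S w ^^ k) f x - (glauber S w ^^ Suc k) f x)"
    unfolding g_def glauber_sum by (simp add: sum_subtractf)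
  also have "\<dots> = f x - (glauber S w ^^ K) f x"
    by (subst sum_lessThan_telescope') simp
  finally show ?thesis by simp
qed

definition variance_proxy :: "real \<Rightarrow> real" where
  "variance_proxy F = F\<^sup>2 * real (card S) / (1 - \<alpha>)"

lemma variance_proxy_pos: "0 < F \<Longrightarrow> 0 < variance_proxy F"
  unfolding variance_proxy_def using card_S_pos \<alpha>_less_1 by simp

text \<open>Solving the Poisson equation \<open>g - glauber S w g = f\<close> up to the geometrically small error
  \<open>(glauber S w ^^ K) f\<close> turns the covariance of \<open>f\<close> and \<open>exp (\<theta> * f)\<close> into a Dirichlet form.\<close>
lemma exp_moment_deriv_le:
  assumes f: "bounded_differences S f F" and F: "0 \<le> F"
    and mean: "(\<Sum>x\<in>Pow S. w x * f x) = 0" and \<theta>: "0 \<le> \<theta>"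
  shows "(\<Sum>x\<in>Pow S. w x * f x * exp (\<theta> * f x))
    \<le> \<theta> * variance_proxy F * (\<Sum>x\<in>Pow S. w x * exp (\<theta> * f x))"
proof -
  define M where "M = (\<Sum>x\<in>Pow S. w x * exp (\<theta> * f x))"
  have "(\<Sum>x\<in>Pow S. w x * f x * exp (\<theta> * f x))
      \<le> \<theta> * variance_proxy F * M + (2 * real (card S) * F * M) * contraction_rate ^ K" for K
  proof -
    define g where "g = (\<lambda>x. \<Sum>k<K. (glauber S w ^^ k) f x)"
    define r where "r = (glauber S w ^^ K) f"
    have split: "w x * f x * E = w x * (g x - glauber S w g x) * E + w x * r x * E" for x E
    proof -
      have "f x = (g x - glauber S w g x) + r x"
        unfolding g_def r_def by (rule glauber_telescope)
      then show ?thesis by (metis distrib_left distrib_right)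
    qed
    have r_bound: "r x \<le> 2 * real (card S) * (contraction_rate ^ K * F)" if "x \<in> Pow S" for x
      using bounded_differences_mean_zero_le[OF glauber_iter_contraction[OF f F], of K x]
        mean that unfolding r_def sum_weight_glauber_iter by simp
    have "(\<Sum>x\<in>Pow S. w x * f x * exp (\<theta> * f x)) =
        (\<Sum>x\<in>Pow S. w x * (g x - glauber S w g x) * exp (\<theta> * f x))
        + (\<Sum>x\<in>Pow S. w x * r x * exp (\<theta> * f x))"
      by (simp add: split sum.distrib)
    also have "\<dots> \<le> \<theta> * variance_proxy F * M
        + (\<Sum>x\<in>Pow S. w x * (2 * real (card S) * (contraction_rate ^ K * F)) * exp (\<theta> * f x))"
    proof (rule add_mono)
      show "(\<Sum>x\<in>Pow S. w x * (g x - glauber S w g x) * exp (\<theta> * f x)) \<le> \<theta> * variance_proxy F * M"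
        using abs_le_D1[OF dirichlet_exp_le[OF \<theta> bounded_differences_glauber_partial_sum[OF f F] f]]
        unfolding g_def M_def variance_proxy_def by (simp add: power2_eq_square mult_ac)
      show "(\<Sum>x\<in>Pow S. w x * r x * exp (\<theta> * f x))
          \<le> (\<Sum>x\<in>Pow S. w x * (2 * real (card S) * (contraction_rate ^ K * F)) * exp (\<theta> * f x))"
        using r_bound w_pos by (intro sum_mono mult_right_mono mult_left_mono) (auto simp: less_imp_le)
    qed
    also have "\<dots> = \<theta> * variance_proxy F * M + (2 * real (card S) * F * M) * contraction_rate ^ K"
      unfolding M_def by (simp add: sum_distrib_left sum_distrib_right mult_ac)
    finally show ?thesis .
  qed
  then show ?thesis
    unfolding M_def by (rule le_of_le_add_geometric[OF _ contraction_rate_bounds])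
qed

text \<open>Herbst's argument: \<open>ln M \<theta> - variance_proxy F * \<theta>\<^sup>2 / 2\<close> is nonincreasing in \<open>\<theta> \<ge> 0\<close>.\<close>
lemma exp_moment_le:
  assumes f: "bounded_differences S f F" and F: "0 \<le> F"
    and mean: "(\<Sum>x\<in>Pow S. w x * f x) = 0" and \<theta>: "0 \<le> \<theta>"
  shows "(\<Sum>x\<in>Pow S. w x * exp (\<theta> * f x))
    \<le> (\<Sum>x\<in>Pow S. w x) * exp (variance_proxy F * \<theta>\<^sup>2 / 2)"
proof -
  define V where "V = variance_proxy F"
  define M where "M t = (\<Sum>x\<in>Pow S. w x * exp (t * f x))" for t
  define M' where "M' t = (\<Sum>x\<in>Pow S. w x * (exp (t * f x) * f x))" for t
  have M_pos: "0 < M t" for t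
    unfolding M_def using finite_S w_pos by (intro sum_pos) auto
  have "DERIV M t :> M' t" for t
    unfolding M_def M'_def by (auto intro!: derivative_eq_intros sum.cong simp: mult_ac)
  then have deriv: "DERIV (\<lambda>t. ln (M t) - V * t\<^sup>2 / 2) t :> M' t / M t - V * t" for t
    by (auto intro!: derivative_eq_intros M_pos)
  have "ln (M \<theta>) - V * \<theta>\<^sup>2 / 2 \<le> ln (M 0) - V * 0\<^sup>2 / 2"
  proof (rule DERIV_nonpos_imp_nonincreasing[OF \<theta>])
    fix t :: real assume t: "0 \<le> t" "t \<le> \<theta>"
    have "M' t \<le> t * V * M t"
      using exp_moment_deriv_le[OF f F mean t(1)] unfolding M'_def M_def V_def by (simp add: mult_ac)
    then have "M' t / M t - V * t \<le> 0" using M_pos[of t] by (simp add: divide_simps mult_ac)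
    then show "\<exists>y. DERIV (\<lambda>t. ln (M t) - V * t\<^sup>2 / 2) t :> y \<and> y \<le> 0" using deriv by blast
  qed
  then have "ln (M \<theta>) \<le> ln (M 0) + V * \<theta>\<^sup>2 / 2" by simp
  then have "M \<theta> \<le> exp (ln (M 0) + V * \<theta>\<^sup>2 / 2)"
    using M_pos[of \<theta>] by (metis exp_le_cancel_iff exp_ln)
  also have "\<dots> = M 0 * exp (V * \<theta>\<^sup>2 / 2)" using M_pos[of 0] by (simp add: exp_add)
  finally show ?thesis unfolding M_def V_def by simp
qed

lemma upper_tail_le:
  assumes f: "bounded_differences S f F" and F: "0 < F"
    and mean: "(\<Sum>x\<in>Pow S. w x * f x) = 0" and t: "0 \<le> t"
  shows "(\<Sum>x\<in>Pow S. if t \<le> f x then w x else 0)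
    \<le> (\<Sum>x\<in>Pow S. w x) * exp (- t\<^sup>2 / (2 * variance_proxy F))"
proof -
  define V where "V = variance_proxy F"
  have V: "0 < V" unfolding V_def using variance_proxy_pos[OF F] .
  define \<theta> where "\<theta> = t / V"
  have \<theta>: "0 \<le> \<theta>" unfolding \<theta>_def using t V by simp
  have "(if t \<le> f x then w x else 0) \<le> exp (- \<theta> * t) * (w x * exp (\<theta> * f x))" for x
  proof -
    have "(if t \<le> f x then w x else 0) \<le> w x * exp (\<theta> * (f x - t))"
      using w_pos[of x] \<theta> by (simp add: less_imp_le mult_le_cancel_left1)
    then show ?thesis by (simp add: mult_exp_exp algebra_simps)
  qed
  then have "(\<Sum>x\<in>Pow S. if t \<le> f x then w x else 0)
      \<le> exp (- \<theta> * t) * (\<Sum>x\<in>Pow S. w x * exp (\<theta> * f x))"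
    by (simp add: sum_distrib_left sum_mono)
  also have "\<dots> \<le> exp (- \<theta> * t) * ((\<Sum>x\<in>Pow S. w x) * exp (V * \<theta>\<^sup>2 / 2))"
    using exp_moment_le[OF f _ mean \<theta>] F unfolding V_def by simp
  also have "\<dots> = (\<Sum>x\<in>Pow S. w x) * exp (- t\<^sup>2 / (2 * V))"
    using V by (simp add: \<theta>_def mult_exp_exp power2_eq_square field_simps)
  finally show ?thesis unfolding V_def .
qed

theorem concentration:
  assumes f: "bounded_differences S f F" and F: "0 < F" and t: "0 \<le> t"
  defines "Z \<equiv> (\<Sum>x\<in>Pow S. w x)"
  defines "m \<equiv> (\<Sum>x\<in>Pow S. w x * f x) / Z"
  shows "(\<Sum>x\<in>Pow S. if t \<le> \<bar>f x - m\<bar> then w x else 0) / Z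
    \<le> 2 * exp (- t\<^sup>2 / (2 * variance_proxy F))"
proof -
  have Z: "0 < Z" unfolding Z_def by (rule sum_w_pos)
  have "(\<Sum>x\<in>Pow S. w x * (f x - m)) = (\<Sum>x\<in>Pow S. w x * f x) - Z * m"
    by (simp add: Z_def right_diff_distrib sum_subtractf sum_distrib_right)
  then have mean: "(\<Sum>x\<in>Pow S. w x * (f x - m)) = 0"
    using Z by (simp add: m_def)
  then have mean': "(\<Sum>x\<in>Pow S. w x * - (f x - m)) = 0"
    unfolding mult_minus_right sum_negf by simp
  have "(\<Sum>x\<in>Pow S. if t \<le> \<bar>f x - m\<bar> then w x else 0)
      \<le> (\<Sum>x\<in>Pow S. (if t \<le> f x - m then w x else 0) + (if t \<le> - (f x - m) then w x else 0))"
    using w_pos by (intro sum_mono) (auto simp: less_imp_le)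
  also have "\<dots> \<le> 2 * (Z * exp (- t\<^sup>2 / (2 * variance_proxy F)))"
    unfolding sum.distrib Z_def
    using upper_tail_le[OF bounded_differences_diff_const[OF f] F mean t]
      upper_tail_le[OF bounded_differences_uminus[OF bounded_differences_diff_const[OF f]] F mean' t]
    by simp
  finally show ?thesis using Z by (simp add: divide_simps mult_ac)
qed

end

section \<open>Dobrushin's condition for the ERGM\<close>

lemma real_card_filter_eq_sum:
  "finite A \<Longrightarrow> real (card {x\<in>A. P x}) = (\<Sum>x\<in>A. if P x then 1 else 0)"
  by (simp add: sum.If_cases Int_def conj_commute)

lemma finite_Edges: "finite (Edges n)"
proof (rule finite_subset)
  show "Edges n \<subseteq> Pow {0..<n}" unfolding Edges_def by auto
qed simp

lemma card_Edges_le: "card (Edges n) \<le> n * n"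
proof -
  have "Edges n \<subseteq> (\<lambda>(a, b). {a, b}) ` ({0..<n} \<times> {0..<n})" unfolding Edges_def by auto
  then have "card (Edges n) \<le> card ((\<lambda>(a, b). {a, b}) ` ({0..<n} \<times> {0..<n}))"
    by (intro card_mono) auto
  also have "\<dots> \<le> card ({0..<n} \<times> {0..<n})" by (rule card_image_le) auto
  finally show ?thesis by (simp add: card_cartesian_product)
qed

lemma doubleton_in_Edges: "a < n \<Longrightarrow> b < n \<Longrightarrow> a \<noteq> b \<Longrightarrow> {a, b} \<in> Edges n"
  unfolding Edges_def by blast

lemma simple_graph_finite: "simple_graph k E \<Longrightarrow> finite E"
  unfolding simple_graph_def by (rule finite_subset[OF _ finite_Edges])

lemma simple_graph_two_le:
  assumes "simple_graph k E" "E \<noteq> {}"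
  shows "2 \<le> k"
proof -
  obtain a b where "a < k" "b < k" "a \<noteq> b"
    using assms unfolding simple_graph_def Edges_def by blast
  then show ?thesis by linarith
qed

lemma card_PiE_fix_two_le:
  assumes "u < k" "v < k" "u \<noteq> v"
  shows "card {\<phi> \<in> {0..<k} \<rightarrow>\<^sub>E {0..<n}. \<phi> u = p \<and> \<phi> v = q} \<le> n ^ (k - 2)"
proof -
  let ?C = "{\<phi> \<in> {0..<k} \<rightarrow>\<^sub>E {0..<n}. \<phi> u = p \<and> \<phi> v = q}"
  let ?K = "{0..<k} - {u, v}"
  have "inj_on (\<lambda>\<phi>. restrict \<phi> ?K) ?C"
  proof (rule inj_onI)
    fix \<phi> \<psi> assume "\<phi> \<in> ?C" "\<psi> \<in> ?C" and eq: "restrict \<phi> ?K = restrict \<psi> ?K"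
    show "\<phi> = \<psi>"
    proof
      fix i
      show "\<phi> i = \<psi> i"
        using fun_cong[OF eq, of i] \<open>\<phi> \<in> ?C\<close> \<open>\<psi> \<in> ?C\<close>
        by (cases "i \<in> ?K") (auto simp: PiE_def extensional_def)
    qed
  qed
  moreover have "(\<lambda>\<phi>. restrict \<phi> ?K) ` ?C \<subseteq> ?K \<rightarrow>\<^sub>E {0..<n}"
  proof (rule image_subsetI)
    fix \<phi> assume "\<phi> \<in> ?C"
    then have "\<forall>i\<in>?K. \<phi> i \<in> {0..<n}" by (auto simp: PiE_iff)
    then show "restrict \<phi> ?K \<in> ?K \<rightarrow>\<^sub>E {0..<n}" by (simp add: restrict_PiE_iff)
  qed
  ultimately have "card ?C \<le> card (?K \<rightarrow>\<^sub>E {0..<n})"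
    by (intro card_inj_on_le) (simp_all add: finite_PiE)
  also have "\<dots> = n ^ (k - 2)"
    using assms by (simp add: card_PiE card_Diff_subset numeral_2_eq_2)
  finally show ?thesis .
qed

text \<open>Choose the edge of \<open>E\<close> mapped onto \<open>e\<close> and its orientation; the remaining \<open>k - 2\<close> images
  are free.\<close>
lemma card_maps_hitting_edge_le:
  assumes G: "simple_graph k E" and e: "e \<in> Edges n"
  shows "card {\<phi> \<in> {0..<k} \<rightarrow>\<^sub>E {0..<n}. e \<in> (\<lambda>a. \<phi> ` a) ` E} \<le> 2 * card E * n ^ (k - 2)"
proof -
  obtain p q where e_pq: "e = {p, q}" using e unfolding Edges_def by auto
  define B where "B a = {\<phi> \<in> {0..<k} \<rightarrow>\<^sub>E {0..<n}. \<phi> ` a = e}" for a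
  have B_le: "card (B a) \<le> 2 * n ^ (k - 2)" if a: "a \<in> E" for a
  proof -
    obtain u v where uv: "a = {u, v}" "u < k" "v < k" "u \<noteq> v"
      using a G unfolding simple_graph_def Edges_def by auto
    let ?C = "\<lambda>p q. {\<phi> \<in> {0..<k} \<rightarrow>\<^sub>E {0..<n}. \<phi> u = p \<and> \<phi> v = q}"
    have "B a \<subseteq> ?C p q \<union> ?C q p"
      unfolding B_def uv e_pq by (auto simp: doubleton_eq_iff)
    then have "card (B a) \<le> card (?C p q \<union> ?C q p)"
      by (rule card_mono[rotated]) (simp add: finite_PiE)
    also have "\<dots> \<le> card (?C p q) + card (?C q p)"
      by (rule card_Un_le)
    finally show ?thesis
      using card_PiE_fix_two_le[OF uv(2-4), of n p q] card_PiE_fix_two_le[OF uv(2-4), of n q p]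
      by linarith
  qed
  have "card (\<Union>a\<in>E. B a) \<le> (\<Sum>a\<in>E. card (B a))"
    by (rule card_UN_le[OF simple_graph_finite[OF G]])
  also have "\<dots> \<le> 2 * card E * n ^ (k - 2)"
    using sum_mono[of E "\<lambda>a. card (B a)", OF B_le] by simp
  finally have "card (\<Union>a\<in>E. B a) \<le> 2 * card E * n ^ (k - 2)" .
  moreover have "{\<phi> \<in> {0..<k} \<rightarrow>\<^sub>E {0..<n}. e \<in> (\<lambda>a. \<phi> ` a) ` E} = (\<Union>a\<in>E. B a)"
    unfolding B_def by auto
  ultimately show ?thesis by simp
qed

lemma abs_indicator_toggle_le:
  "\<bar>(if A \<subseteq> insert e x then 1 else 0) - (if A \<subseteq> x - {e} then 1 else 0)\<bar>
    \<le> (if e \<in> A then 1 else (0::real))"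
  by auto

lemma abs_indicator_double_toggle_le:
  assumes "j \<noteq> e"
  shows "\<bar>((if A \<subseteq> insert j (insert e x) then 1 else 0) - (if A \<subseteq> insert e x - {j} then 1 else 0))
     - ((if A \<subseteq> insert j (x - {e}) then 1 else 0) - (if A \<subseteq> x - {e} - {j} then 1 else 0))\<bar>
     \<le> (if j \<in> A \<and> e \<in> A then 1 else (0::real))"
proof (cases "j \<in> A \<and> e \<in> A")
  case True
  then have "\<not> A \<subseteq> insert e x - {j}" "\<not> A \<subseteq> insert j (x - {e})" "\<not> A \<subseteq> x - {e} - {j}"
    using assms by auto
  then show ?thesis using True by simp
next
  case False
  then consider "j \<notin> A" | "e \<notin> A" by blast
  then show ?thesis
  proof cases
    case 1
    then have "A \<subseteq> insert j (insert e x) \<longleftrightarrow> A \<subseteq> insert e x - {j}"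
      "A \<subseteq> insert j (x - {e}) \<longleftrightarrow> A \<subseteq> x - {e} - {j}" by auto
    then show ?thesis by simp
  next
    case 2
    then have "A \<subseteq> insert j (insert e x) \<longleftrightarrow> A \<subseteq> insert j (x - {e})"
      "A \<subseteq> insert e x - {j} \<longleftrightarrow> A \<subseteq> x - {e} - {j}" by auto
    then show ?thesis by simp
  qed
qed

lemma abs_scaled_sum_le:
  "(\<And>a. a \<in> A \<Longrightarrow> \<bar>f a\<bar> \<le> g a) \<Longrightarrow> \<bar>c * (\<Sum>a\<in>A. f a)\<bar> \<le> \<bar>c\<bar> * (\<Sum>a\<in>A. g a :: real)"
  unfolding abs_mult by (intro mult_left_mono order_trans[OF sum_abs sum_mono]) auto

definition logistic :: "real \<Rightarrow> real" where
  "logistic z = 1 / (1 + exp (- z))"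

lemma logistic_has_derivative: "(logistic has_real_derivative exp (- z) / (1 + exp (- z))\<^sup>2) (at z)"
proof -
  have "1 + exp (- z) \<noteq> 0" using exp_gt_zero[of "- z"] by linarith
  then show ?thesis
    unfolding logistic_def[abs_def]
    by (auto intro!: derivative_eq_intros simp: power2_eq_square)
qed

lemma logistic_deriv_le: "exp (- (z::real)) / (1 + exp (- z))\<^sup>2 \<le> 1 / 4"
proof -
  have "4 * exp (- z) \<le> (1 + exp (- z))\<^sup>2"
    using zero_le_power2[of "1 - exp (- z)"] by (simp add: power2_eq_square algebra_simps)
  then show ?thesis by (simp add: divide_simps)
qed

lemma logistic_lipschitz: "\<bar>logistic x - logistic y\<bar> \<le> \<bar>x - y\<bar> / 4"
proof -
  have *: "\<bar>logistic b - logistic a\<bar> \<le> (b - a) / 4" if ab: "a < b" for a b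
  proof -
    obtain z where z: "logistic b - logistic a = (b - a) * (exp (- z) / (1 + exp (- z))\<^sup>2)"
      using MVT2[OF ab, of logistic "\<lambda>z. exp (- z) / (1 + exp (- z))\<^sup>2"]
        logistic_has_derivative by blast
    then have "\<bar>logistic b - logistic a\<bar> = (b - a) * (exp (- z) / (1 + exp (- z))\<^sup>2)"
      using ab by simp
    also have "\<dots> \<le> (b - a) * (1 / 4)"
      using ab by (intro mult_left_mono logistic_deriv_le) simp
    finally show ?thesis by simp
  qed
  show ?thesis
    using *[of x y] *[of y x] by (cases x y rule: linorder_cases) (auto simp: abs_minus_commute)
qed

lemma exp_ratio_eq_logistic: "exp a / (exp a + exp b) = logistic (a - b)"
  by (simp add: logistic_def exp_diff field_simps)

lemma deriv_Phi_at_1: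
  "deriv (Phi s b G) 1 = (\<Sum>i<s. b i * real (card (snd (G i))) * real (card (snd (G i)) - 1))"
proof -
  have "(Phi s b G has_real_derivative
      (\<Sum>i<s. b i * real (card (snd (G i))) * (real (card (snd (G i)) - 1) * 1 ^ (card (snd (G i)) - 1 - Suc 0))))
      (at 1)"
    unfolding Phi_def[abs_def] by (intro DERIV_sum DERIV_cmult DERIV_pow)
  then show ?thesis by (simp add: DERIV_imp_deriv)
qed

locale ergm =
  fixes s :: nat and beta :: "nat \<Rightarrow> real" and G :: "nat \<Rightarrow> nat \<times> nat set set" and n :: nat
  assumes simple: "\<forall>i<s. simple_graph (fst (G i)) (snd (G i))" and n_pos: "0 < n"
begin

abbreviation H :: "nat set set \<Rightarrow> real" where
  "H \<equiv> ergm_H s beta G n"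

definition embeddings :: "nat \<Rightarrow> (nat \<Rightarrow> nat) set" where
  "embeddings i = {\<phi> \<in> {0..<fst (G i)} \<rightarrow>\<^sub>E {0..<n}. inj_on \<phi> {0..<fst (G i)}}"

definition embedded_edges :: "nat \<Rightarrow> (nat \<Rightarrow> nat) \<Rightarrow> nat set set" where
  "embedded_edges i \<phi> = (\<lambda>a. \<phi> ` a) ` snd (G i)"

definition scaled_beta :: "nat \<Rightarrow> real" where
  "scaled_beta i = beta i * real n powr (2 - real (fst (G i)))"

definition energy_diff :: "nat set \<Rightarrow> nat set set \<Rightarrow> real" where
  "energy_diff e x = H (insert e x) - H (x - {e})"

definition energy_diff_bound :: real where
  "energy_diff_bound = (\<Sum>i<s. 2 * \<bar>beta i\<bar> * real (card (snd (G i))))"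

definition dobrushin_coeff :: real where
  "dobrushin_coeff = deriv (Phi s (\<lambda>i. \<bar>beta i\<bar>) G) 1 / 2"

lemma dobrushin_coeff_eq:
  "dobrushin_coeff = (\<Sum>i<s. \<bar>beta i\<bar> * real (card (snd (G i))) * real (card (snd (G i)) - 1)) / 2"
  unfolding dobrushin_coeff_def deriv_Phi_at_1 ..

lemma dobrushin_coeff_nonneg: "0 \<le> dobrushin_coeff"
  unfolding dobrushin_coeff_eq by (intro divide_nonneg_pos sum_nonneg) auto

lemma finite_embeddings: "finite (embeddings i)"
  by (rule finite_subset[of _ "{0..<fst (G i)} \<rightarrow>\<^sub>E {0..<n}"]) (auto simp: embeddings_def finite_PiE)

lemma finite_embedded_edges: "i < s \<Longrightarrow> finite (embedded_edges i \<phi>)"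
  using simple simple_graph_finite unfolding embedded_edges_def by blast

lemma H_eq_sum_embeddings:
  "H x = (\<Sum>i<s. scaled_beta i * (\<Sum>\<phi>\<in>embeddings i. if embedded_edges i \<phi> \<subseteq> x then 1 else 0))"
proof -
  have "{f \<in> {0..<fst (G i)} \<rightarrow>\<^sub>E {0..<n}. inj_on f {0..<fst (G i)} \<and> (\<forall>e \<in> snd (G i). f ` e \<in> x)}
      = {\<phi> \<in> embeddings i. embedded_edges i \<phi> \<subseteq> x}" for i
    unfolding embeddings_def embedded_edges_def by (auto simp: image_subset_iff)
  then show ?thesis
    unfolding ergm_H_def scaled_beta_def NG_def
    by (simp add: real_card_filter_eq_sum[OF finite_embeddings] mult.assoc)
qed

lemma energy_diff_eq: "energy_diff e x = (\<Sum>i<s. scaled_beta i * (\<Sum>\<phi>\<in>embeddings i.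
    (if embedded_edges i \<phi> \<subseteq> insert e x then 1 else 0) - (if embedded_edges i \<phi> \<subseteq> x - {e} then 1 else 0)))"
  unfolding energy_diff_def H_eq_sum_embeddings by (simp add: sum_subtractf right_diff_distrib)

lemma abs_energy_diff_le_count:
  "\<bar>energy_diff e x\<bar>
    \<le> (\<Sum>i<s. \<bar>scaled_beta i\<bar> * (\<Sum>\<phi>\<in>embeddings i. if e \<in> embedded_edges i \<phi> then 1 else 0))"
  unfolding energy_diff_eq
  by (intro order_trans[OF sum_abs sum_mono] abs_scaled_sum_le abs_indicator_toggle_le)

lemma abs_energy_diff_double_toggle_le_count:
  assumes "j \<noteq> e"
  shows "\<bar>energy_diff j (insert e x) - energy_diff j (x - {e})\<bar>
    \<le> (\<Sum>i<s. \<bar>scaled_beta i\<bar> *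
         (\<Sum>\<phi>\<in>embeddings i. if j \<in> embedded_edges i \<phi> \<and> e \<in> embedded_edges i \<phi> then 1 else 0))"
proof -
  have eq: "energy_diff j (insert e x) - energy_diff j (x - {e})
    = (\<Sum>i<s. scaled_beta i * (\<Sum>\<phi>\<in>embeddings i.
        ((if embedded_edges i \<phi> \<subseteq> insert j (insert e x) then 1 else 0)
          - (if embedded_edges i \<phi> \<subseteq> insert e x - {j} then 1 else 0))
        - ((if embedded_edges i \<phi> \<subseteq> insert j (x - {e}) then 1 else 0)
          - (if embedded_edges i \<phi> \<subseteq> x - {e} - {j} then 1 else 0))))"
    unfolding energy_diff_eq by (simp only: sum_subtractf[symmetric] right_diff_distrib[symmetric])
  show ?thesis
    unfolding eq
    by (intro order_trans[OF sum_abs sum_mono] abs_scaled_sum_le abs_indicator_double_toggle_le assms)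
qed

text \<open>The normalisation \<open>n ^ (2 - |V_i|)\<close> exactly compensates the \<open>O(n ^ (|V_i| - 2))\<close> copies of
  \<open>G_i\<close> through a fixed edge.\<close>
lemma scaled_count_through_edge_le:
  assumes i: "i < s" and e: "e \<in> Edges n"
  shows "\<bar>scaled_beta i\<bar> * (\<Sum>\<phi>\<in>embeddings i. if e \<in> embedded_edges i \<phi> then 1 else 0)
    \<le> 2 * \<bar>beta i\<bar> * real (card (snd (G i)))"
proof (cases "snd (G i) = {}")
  case True
  then show ?thesis by (simp add: embedded_edges_def)
next
  case False
  let ?k = "fst (G i)"
  have k: "2 \<le> ?k" using simple_graph_two_le[OF _ False] simple i by blast
  have "(\<Sum>\<phi>\<in>embeddings i. if e \<in> embedded_edges i \<phi> then 1 else 0)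
      = real (card {\<phi>\<in>embeddings i. e \<in> embedded_edges i \<phi>})"
    by (simp add: real_card_filter_eq_sum[OF finite_embeddings])
  also have "\<dots> \<le> real (card {\<phi> \<in> {0..<?k} \<rightarrow>\<^sub>E {0..<n}. e \<in> (\<lambda>a. \<phi> ` a) ` snd (G i)})"
    unfolding of_nat_le_iff
    by (rule card_mono) (auto simp: finite_PiE embeddings_def embedded_edges_def)
  also have "\<dots> \<le> real (2 * card (snd (G i)) * n ^ (?k - 2))"
    unfolding of_nat_le_iff by (rule card_maps_hitting_edge_le[OF _ e]) (use simple i in blast)
  finally have "(\<Sum>\<phi>\<in>embeddings i. if e \<in> embedded_edges i \<phi> then 1 else 0)
      \<le> 2 * real (card (snd (G i))) * real n ^ (?k - 2)" by simp
  then have "\<bar>scaled_beta i\<bar> * (\<Sum>\<phi>\<in>embeddings i. if e \<in> embedded_edges i \<phi> then 1 else 0)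
      \<le> (\<bar>beta i\<bar> * real n powr (2 - real ?k)) * (2 * real (card (snd (G i))) * real n ^ (?k - 2))"
    unfolding scaled_beta_def abs_mult by (simp add: mult_left_mono)
  also have "\<dots> = 2 * \<bar>beta i\<bar> * real (card (snd (G i))) * (real n powr (2 - real ?k) * real n ^ (?k - 2))"
    by (simp add: mult_ac)
  also have "real n powr (2 - real ?k) * real n ^ (?k - 2) = 1"
    using k n_pos by (simp add: powr_realpow[symmetric] powr_add[symmetric] of_nat_diff)
  finally show ?thesis by simp
qed

lemma abs_energy_diff_le: "e \<in> Edges n \<Longrightarrow> \<bar>energy_diff e x\<bar> \<le> energy_diff_bound"
  unfolding energy_diff_bound_def
  by (rule order_trans[OF abs_energy_diff_le_count sum_mono]) (simp add: scaled_count_through_edge_le)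

lemma card_other_edges_in_copy_le:
  assumes i: "i < s"
  shows "(\<Sum>j\<in>Edges n - {e}. if j \<in> embedded_edges i \<phi> \<and> e \<in> embedded_edges i \<phi> then 1 else 0)
    \<le> (if e \<in> embedded_edges i \<phi> then 1 else 0) * real (card (snd (G i)) - 1)"
proof (cases "e \<in> embedded_edges i \<phi>")
  case True
  have fin: "finite (embedded_edges i \<phi>)" by (rule finite_embedded_edges[OF i])
  have "(\<Sum>j\<in>Edges n - {e}. if j \<in> embedded_edges i \<phi> \<and> e \<in> embedded_edges i \<phi> then 1 else 0)
      = real (card {j \<in> Edges n - {e}. j \<in> embedded_edges i \<phi>})"
    by (subst real_card_filter_eq_sum) (simp_all add: finite_Edges True)
  also have "card {j \<in> Edges n - {e}. j \<in> embedded_edges i \<phi>} \<le> card (embedded_edges i \<phi> - {e})"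
    using fin by (intro card_mono) auto
  also have "\<dots> = card (embedded_edges i \<phi>) - 1"
    using True fin by simp
  also have "card (embedded_edges i \<phi>) \<le> card (snd (G i))"
    unfolding embedded_edges_def using simple i by (intro card_image_le simple_graph_finite) blast
  finally show ?thesis using True by simp
qed simp

text \<open>A copy of \<open>G_i\<close> through \<open>e\<close> couples \<open>e\<close> with its \<open>|E_i| - 1\<close> other edges: this is where
  \<open>\<Phi>'\<^bsub>|\<beta>|\<^esub>(1)\<close> comes from.\<close>
lemma sum_abs_energy_diff_double_toggle_le:
  assumes e: "e \<in> Edges n"
  shows "(\<Sum>j\<in>Edges n - {e}. \<bar>energy_diff j (insert e x) - energy_diff j (x - {e})\<bar>)
    \<le> 4 * dobrushin_coeff"
proof -
  let ?c = "\<lambda>i. real (card (snd (G i)) - 1)"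
  have "(\<Sum>j\<in>Edges n - {e}. \<bar>energy_diff j (insert e x) - energy_diff j (x - {e})\<bar>)
      \<le> (\<Sum>j\<in>Edges n - {e}. \<Sum>i<s. \<bar>scaled_beta i\<bar> * (\<Sum>\<phi>\<in>embeddings i.
          if j \<in> embedded_edges i \<phi> \<and> e \<in> embedded_edges i \<phi> then 1 else 0))"
    by (intro sum_mono abs_energy_diff_double_toggle_le_count) auto
  also have "\<dots> = (\<Sum>i<s. \<bar>scaled_beta i\<bar> * (\<Sum>\<phi>\<in>embeddings i. \<Sum>j\<in>Edges n - {e}.
          if j \<in> embedded_edges i \<phi> \<and> e \<in> embedded_edges i \<phi> then 1 else 0))"
    by (simp add: sum.swap[of _ "Edges n - {e}"] sum_distrib_left)
  also have "\<dots> \<le> (\<Sum>i<s. \<bar>scaled_beta i\<bar> * (\<Sum>\<phi>\<in>embeddings i.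
          (if e \<in> embedded_edges i \<phi> then 1 else 0) * ?c i))"
    by (intro sum_mono mult_left_mono card_other_edges_in_copy_le) auto
  also have "\<dots> = (\<Sum>i<s. (\<bar>scaled_beta i\<bar> *
          (\<Sum>\<phi>\<in>embeddings i. if e \<in> embedded_edges i \<phi> then 1 else 0)) * ?c i)"
    by (simp add: sum_distrib_right mult.assoc)
  also have "\<dots> \<le> (\<Sum>i<s. (2 * \<bar>beta i\<bar> * real (card (snd (G i)))) * ?c i)"
    by (intro sum_mono mult_right_mono scaled_count_through_edge_le[OF _ e]) auto
  also have "\<dots> = 4 * dobrushin_coeff"
    unfolding dobrushin_coeff_eq by (simp add: sum_distrib_left mult_ac)
  finally show ?thesis .
qed

lemma glauber_prob_ergm: "glauber_prob (\<lambda>x. exp (H x)) j x = logistic (energy_diff j x)"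
  unfolding glauber_prob_def energy_diff_def by (rule exp_ratio_eq_logistic)

lemma dobrushin_ergm:
  assumes "dobrushin_coeff < 1" and "2 \<le> n"
  shows "dobrushin (Edges n) (\<lambda>x. exp (H x)) dobrushin_coeff"
proof unfold_locales
  show "finite (Edges n)" by (rule finite_Edges)
  show "Edges n \<noteq> {}" using doubleton_in_Edges[of 0 n 1] assms(2) by auto
  show "0 < exp (H x)" for x by simp
  show "0 \<le> dobrushin_coeff" by (rule dobrushin_coeff_nonneg)
  show "dobrushin_coeff < 1" by (rule assms(1))
  fix e x assume e: "e \<in> Edges n"
  have "(\<Sum>j\<in>Edges n - {e}. \<bar>glauber_prob (\<lambda>x. exp (H x)) j (insert e x)
        - glauber_prob (\<lambda>x. exp (H x)) j (x - {e})\<bar>)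
      \<le> (\<Sum>j\<in>Edges n - {e}. \<bar>energy_diff j (insert e x) - energy_diff j (x - {e})\<bar> / 4)"
    unfolding glauber_prob_ergm by (intro sum_mono logistic_lipschitz)
  also have "\<dots> \<le> dobrushin_coeff"
    using sum_abs_energy_diff_double_toggle_le[OF e, of x] by (simp add: sum_divide_distrib[symmetric])
  finally show "(\<Sum>j\<in>Edges n - {e}. \<bar>glauber_prob (\<lambda>x. exp (H x)) j (insert e x)
        - glauber_prob (\<lambda>x. exp (H x)) j (x - {e})\<bar>) \<le> dobrushin_coeff" .
qed

end

section \<open>Triangle counts\<close>

lemma finite_T3set: "finite (T3set n)"
proof (rule finite_subset)
  show "T3set n \<subseteq> (\<lambda>(a, b, c). {{a, b}, {b, c}, {a, c}}) ` ({0..<n} \<times> {0..<n} \<times> {0..<n})"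
    unfolding T3set_def by auto
qed simp

lemma T3set_empty: "n < 3 \<Longrightarrow> T3set n = {}"
  unfolding T3set_def by auto

lemma T3set_through_edge:
  assumes t: "t \<in> T3set n" and pq: "{p, q} \<in> t"
  shows "\<exists>r<n. t = {{p, q}, {q, r}, {p, r}}"
proof -
  obtain a b c where t_abc: "t = {{a, b}, {b, c}, {a, c}}" and abc: "a < n" "b < n" "c < n"
    using t unfolding T3set_def by blast
  then consider "{p, q} = {a, b}" | "{p, q} = {b, c}" | "{p, q} = {a, c}" using pq by blast
  then show ?thesis
  proof cases
    case 1
    then show ?thesis
      using abc unfolding t_abc doubleton_eq_iff by (intro exI[of _ c]) (auto simp: insert_commute)
  next
    case 2
    then show ?thesis
      using abc unfolding t_abc doubleton_eq_iff by (intro exI[of _ a]) (auto simp: insert_commute)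
  next
    case 3
    then show ?thesis
      using abc unfolding t_abc doubleton_eq_iff by (intro exI[of _ b]) (auto simp: insert_commute)
  qed
qed

lemma card_T3set_through_edge_le:
  assumes "e \<in> Edges n"
  shows "card {t \<in> T3set n. e \<in> t} \<le> n"
proof -
  obtain p q where e: "e = {p, q}" using assms unfolding Edges_def by blast
  have "{t \<in> T3set n. e \<in> t} \<subseteq> (\<lambda>r. {{p, q}, {q, r}, {p, r}}) ` {0..<n}"
    using T3set_through_edge unfolding e by fastforce
  then have "card {t \<in> T3set n. e \<in> t} \<le> card ((\<lambda>r. {{p, q}, {q, r}, {p, r}}) ` {0..<n})"
    by (intro card_mono) auto
  also have "\<dots> \<le> n"
    using card_image_le[of "{0..<n}"] by simp
  finally show ?thesis .
qed

lemma T3_bounded_differences: "bounded_differences (Edges n) (T3 n) (real n)"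
  unfolding bounded_differences_def
proof (intro ballI allI)
  fix e x assume e: "e \<in> Edges n"
  let ?X = "\<lambda>y t. \<Prod>e'\<in>t. Xe e' y"
  have "\<bar>?X (insert e x) t - ?X (x - {e}) t\<bar> \<le> (if e \<in> t then 1 else 0)" for t
  proof (cases "e \<in> t")
    case False
    then have "?X (insert e x) t = ?X (x - {e}) t"
      by (intro prod.cong) (auto simp: Xe_def)
    then show ?thesis by simp
  next
    case True
    have X: "0 \<le> ?X y t" "?X y t \<le> 1" for y
      by (auto intro!: prod_nonneg prod_le_1 simp: Xe_def)
    show ?thesis using X[of "insert e x"] X[of "x - {e}"] True by (simp add: abs_le_iff)
  qed
  then have "\<bar>T3 n (insert e x) - T3 n (x - {e})\<bar> \<le> (\<Sum>t\<in>T3set n. if e \<in> t then 1 else 0)"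
    unfolding T3_def sum_subtractf[symmetric] by (intro order_trans[OF sum_abs sum_mono])
  also have "\<dots> = real (card {t \<in> T3set n. e \<in> t})"
    by (simp add: real_card_filter_eq_sum[OF finite_T3set])
  also have "\<dots> \<le> real n"
    using card_T3set_through_edge_le[OF e] by simp
  finally show "\<bar>T3 n (insert e x) - T3 n (x - {e})\<bar> \<le> real n" .
qed

lemma ergm_P_le_1: "ergm_P s beta G n P \<le> 1"
proof -
  have "0 < (\<Sum>x\<in>Pow (Edges n). exp (ergm_H s beta G n x))"
    using finite_Edges by (intro sum_pos) auto
  moreover have "(\<Sum>x\<in>Pow (Edges n). exp (ergm_H s beta G n x) * (if P x then 1 else 0))
      \<le> (\<Sum>x\<in>Pow (Edges n). exp (ergm_H s beta G n x))"
    by (intro sum_mono) auto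
  ultimately show ?thesis
    unfolding ergm_P_def ergm_E_def by simp
qed

lemma ergm_P_T3_deviation_small_n:
  assumes "n < 3" and "0 \<le> t"
  shows "ergm_P s beta G n (\<lambda>x. t \<le> \<bar>T3 n x - ergm_E s beta G n (T3 n)\<bar>)
    \<le> 2 * exp (- c * min (min (t\<^sup>2 / a) (t / b)) (t powr (2/3) / 2))"
proof (cases "t = 0")
  case True
  then show ?thesis using ergm_P_le_1[of s beta G n "\<lambda>x. True"] by simp
next
  case False
  then show ?thesis
    using assms unfolding ergm_P_def ergm_E_def T3_def T3set_empty[OF assms(1)] by simp
qed

lemma min_deviation_exponent_le:
  fixes cS cE \<delta> t a b :: real and n :: nat
  assumes "0 < \<delta>" "\<delta> \<le> cS" "0 < n"
  shows "min (min (t\<^sup>2 / max (max (cS * real n ^ 4) (cE * real n ^ 3)) (real n ^ 3)) a) b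
    \<le> t\<^sup>2 / (\<delta> * real n ^ 4)"
proof -
  have "\<delta> * real n ^ 4 \<le> max (max (cS * real n ^ 4) (cE * real n ^ 3)) (real n ^ 3)"
    using assms(2) by (simp add: le_max_iff_disj mult_right_mono)
  then have "t\<^sup>2 / max (max (cS * real n ^ 4) (cE * real n ^ 3)) (real n ^ 3) \<le> t\<^sup>2 / (\<delta> * real n ^ 4)"
    using assms by (intro frac_le) auto
  then show ?thesis by linarith
qed

context ergm
begin

lemma T3_concentration:
  assumes "dobrushin_coeff < 1" and "2 \<le> n" and "0 \<le> t"
  shows "ergm_P s beta G n (\<lambda>x. t \<le> \<bar>T3 n x - ergm_E s beta G n (T3 n)\<bar>)
    \<le> 2 * exp (- t\<^sup>2 * (1 - dobrushin_coeff) / (2 * real n ^ 4))"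
proof -
  interpret dobrushin "Edges n" "\<lambda>x. exp (H x)" dobrushin_coeff
    by (rule dobrushin_ergm[OF assms(1,2)])
  have "(1 - dobrushin_coeff) * variance_proxy (real n) \<le> real n ^ 4"
    unfolding variance_proxy_def using card_Edges_le[of n] assms(1)
    by (simp add: power2_eq_square power4_eq_xxxx mult_left_mono flip: of_nat_mult)
  then have "t\<^sup>2 * ((1 - dobrushin_coeff) * variance_proxy (real n)) \<le> t\<^sup>2 * real n ^ 4"
    by (rule mult_left_mono) simp
  then have exponent: "- t\<^sup>2 / (2 * variance_proxy (real n))
      \<le> - t\<^sup>2 * (1 - dobrushin_coeff) / (2 * real n ^ 4)"
    using variance_proxy_pos[of "real n"] assms by (simp add: field_simps)
  have "ergm_P s beta G n (\<lambda>x. t \<le> \<bar>T3 n x - ergm_E s beta G n (T3 n)\<bar>)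
      = (\<Sum>x\<in>Pow (Edges n). if t \<le> \<bar>T3 n x - (\<Sum>y\<in>Pow (Edges n). exp (H y) * T3 n y)
          / (\<Sum>y\<in>Pow (Edges n). exp (H y))\<bar> then exp (H x) else 0)
        / (\<Sum>x\<in>Pow (Edges n). exp (H x))"
    unfolding ergm_P_def ergm_E_def by (intro arg_cong2[where f = "(/)"] sum.cong) auto
  also have "\<dots> \<le> 2 * exp (- t\<^sup>2 / (2 * variance_proxy (real n)))"
    by (rule concentration[OF T3_bounded_differences]) (use assms in auto)
  also have "\<dots> \<le> 2 * exp (- t\<^sup>2 * (1 - dobrushin_coeff) / (2 * real n ^ 4))"
    using exponent by simp
  finally show ?thesis .
qed

lemma C_S2_lower_bound:
  assumes "3 \<le> n"
  shows "1 / (1 + exp energy_diff_bound)\<^sup>2 \<le> C_S2 s beta G n"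
proof -
  interpret positive_weight "Edges n" "\<lambda>x. exp (H x)"
    using finite_Edges doubleton_in_Edges[of 0 n 1] assms by unfold_locales auto
  define K where "K = exp energy_diff_bound"
  define Z where "Z = (\<Sum>x\<in>Pow (Edges n). exp (H x))"
  have e01: "{0, 1} \<in> Edges n" and e02: "{0, 2} \<in> Edges n"
    using assms by (auto intro: doubleton_in_Edges)
  have K: "exp (H (x - {e})) \<le> K * exp (H (insert e x))" if "e \<in> Edges n" for e x
    using abs_energy_diff_le[OF that, of x]
    by (simp add: K_def energy_diff_def flip: exp_add)
  have "Z \<le> (1 + K) * (\<Sum>x\<in>Pow (Edges n). if {0, 1} \<in> x then exp (H x) else 0)"
    using sum_weight_le_sum_weight_containing[OF e01 K[OF e01], of "\<lambda>_. True"] by (simp add: Z_def)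
  also have "\<dots> \<le> (1 + K) * ((1 + K) *
      (\<Sum>x\<in>Pow (Edges n). if {0, 1} \<in> x \<and> {0, 2} \<in> x then exp (H x) else 0))"
    using sum_weight_le_sum_weight_containing[OF e02 K[OF e02], of "\<lambda>x. {0, 1} \<in> x"]
    by (intro mult_left_mono) (auto simp: K_def doubleton_eq_iff)
  also have "(\<Sum>x\<in>Pow (Edges n). if {0, 1} \<in> x \<and> {0, 2} \<in> x then exp (H x) else 0)
      = C_S2 s beta G n * Z"
    using sum_w_pos unfolding C_S2_def ergm_E_def Z_def
    by (simp, intro sum.cong) (auto simp: Xe_def)
  finally have "Z * 1 \<le> Z * ((1 + K)\<^sup>2 * C_S2 s beta G n)"
    by (simp add: power2_eq_square mult_ac)
  then have "1 \<le> (1 + K)\<^sup>2 * C_S2 s beta G n"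
    using sum_w_pos unfolding Z_def by (simp only: mult_le_cancel_left_pos)
  moreover have "0 < (1 + K)\<^sup>2" unfolding K_def by (intro zero_less_power add_pos_pos) simp_all
  ultimately show ?thesis
    unfolding K_def[symmetric] by (simp add: pos_divide_le_eq mult.commute)
qed

lemma T3_deviation_le:
  assumes "dobrushin_coeff < 1" and "3 \<le> n" and "0 \<le> t"
  defines "C \<equiv> 2 * (1 + exp energy_diff_bound)\<^sup>2 / (1 - dobrushin_coeff)"
  shows "ergm_P s beta G n (\<lambda>x. t \<le> \<bar>T3 n x - ergm_E s beta G n (T3 n)\<bar>)
    \<le> 2 * exp (- (1 / C) * min (min
         (t\<^sup>2 / max (max (C_S2 s beta G n * real n ^ 4) (C_E s beta G n * real n ^ 3)) (real n ^ 3))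
         a) b)" (is "_ \<le> 2 * exp (- (1 / C) * ?m)")
proof -
  have pos: "0 < (1 + exp energy_diff_bound)\<^sup>2" by (intro zero_less_power add_pos_pos) simp_all
  define \<delta> where "\<delta> = 1 / (1 + exp energy_diff_bound)\<^sup>2"
  have \<delta>: "0 < \<delta>" unfolding \<delta>_def using pos by simp
  have "?m \<le> t\<^sup>2 / (\<delta> * real n ^ 4)"
    using min_deviation_exponent_le[OF \<delta> C_S2_lower_bound[OF assms(2), folded \<delta>_def]] assms(2)
    by simp
  then have "(1 / C) * ?m \<le> (1 / C) * (t\<^sup>2 / (\<delta> * real n ^ 4))"
    using \<delta> assms(1) unfolding C_def \<delta>_def by (intro mult_left_mono) simp_all
  also have "\<dots> = t\<^sup>2 * (1 - dobrushin_coeff) / (2 * real n ^ 4)"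
    unfolding C_def \<delta>_def using assms(1,2) pos by (simp add: field_simps)
  finally have exponent: "(1 / C) * ?m \<le> t\<^sup>2 * (1 - dobrushin_coeff) / (2 * real n ^ 4)" .
  have "ergm_P s beta G n (\<lambda>x. t \<le> \<bar>T3 n x - ergm_E s beta G n (T3 n)\<bar>)
      \<le> 2 * exp (- t\<^sup>2 * (1 - dobrushin_coeff) / (2 * real n ^ 4))"
    by (rule T3_concentration) (use assms in auto)
  also have "\<dots> \<le> 2 * exp (- (1 / C) * ?m)"
    using exponent by (intro mult_left_mono exp_mono) simp_all
  finally show ?thesis .
qed

end

theorem corollary2p6:
  fixes s :: nat and beta :: "nat \<Rightarrow> real" and G :: "nat \<Rightarrow> nat \<times> nat set set"
  assumes "s \<ge> 1"
    and "\<forall>i<s. simple_graph (fst (G i)) (snd (G i))"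
    and "G 0 = (2, {{0, 1}})"
    and "deriv (Phi s (\<lambda>i. \<bar>beta i\<bar>) G) 1 / 2 < 1"
  shows "\<exists>C>0. \<forall>(n::nat) (t::real). t \<ge> 0 \<longrightarrow>
    ergm_P s beta G n (\<lambda>x. \<bar>T3 n x - ergm_E s beta G n (T3 n)\<bar> \<ge> t)
    \<le> 2 * exp (- (1 / C) * min (min
         (t\<^sup>2 / max (max (C_S2 s beta G n * real n ^ 4) (C_E s beta G n * real n ^ 3)) (real n ^ 3))
         (t / max (sqrt (2 * real n)) (2 * C_E s beta G n * real n)))
         (t powr (2/3) / 2))"
proof -
  define C where "C = 2 * (1 + exp (\<Sum>i<s. 2 * \<bar>beta i\<bar> * real (card (snd (G i)))))\<^sup>2
    / (1 - deriv (Phi s (\<lambda>i. \<bar>beta i\<bar>) G) 1 / 2)"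
  have "0 < C"
    using assms(4) unfolding C_def by (intro divide_pos_pos mult_pos_pos zero_less_power add_pos_pos) simp_all
  moreover have "ergm_P s beta G n (\<lambda>x. t \<le> \<bar>T3 n x - ergm_E s beta G n (T3 n)\<bar>)
      \<le> 2 * exp (- (1 / C) * min (min
         (t\<^sup>2 / max (max (C_S2 s beta G n * real n ^ 4) (C_E s beta G n * real n ^ 3)) (real n ^ 3))
         (t / max (sqrt (2 * real n)) (2 * C_E s beta G n * real n)))
         (t powr (2/3) / 2))"
    if t: "0 \<le> t" for n t
  proof (cases "3 \<le> n")
    case True
    interpret ergm s beta G n using assms(2) True by unfold_locales auto
    have "dobrushin_coeff < 1" using assms(4) unfolding dobrushin_coeff_def .
    from T3_deviation_le[OF this True t] show ?thesis
      unfolding C_def dobrushin_coeff_def energy_diff_bound_def .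
  next
    case False
    then show ?thesis using t by (intro ergm_P_T3_deviation_small_n) simp_all
  qed
  ultimately show ?thesis by blast
qed

end
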